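(* Let $\triangle ABC$ be an acute triangle circumscribed about an ellipse with semi-axes $a>b>0$ whose center coincides with the circumcenter of $\triangle ABC$. Then the inradius of the orthic triangle of $\triangle ABC$ equals $\dfrac{ab}{a+b}$.
   Context: A triangle is circumscribed about a conic if each of its three sidelines is tangent to the conic. The orthic triangle of $\triangle ABC$ is the triangle $H_AH_BH_C$ whose vertices are the feet of the perpendiculars from $A,B,C$ to the lines $BC,CA,AB$, respectively. *)

theory Defs
  imports "HOL-Analysis.Analysis"
begin

type_synonym point = "real^2"

definition sideline :: "point \<Rightarrow> point \<Rightarrow> point set" where
  "sideline P Q = affine hull {P, Q}"

definition nondegenerate_triangle :: "point \<Rightarrow> point \<Rightarrow> point \<Rightarrow> bool" where
  "nondegenerate_triangle A B C \<longleftrightarrow> \<not> collinear {A, B, C}"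

definition angle_at :: "point \<Rightarrow> point \<Rightarrow> point \<Rightarrow> real" where
  "angle_at X V Y = arccos (((X - V) \<bullet> (Y - V)) / (norm (X - V) * norm (Y - V)))"

definition acute_triangle :: "point \<Rightarrow> point \<Rightarrow> point \<Rightarrow> bool" where
  "acute_triangle A B C \<longleftrightarrow> nondegenerate_triangle A B C \<and>
     angle_at B A C < pi / 2 \<and> angle_at A B C < pi / 2 \<and> angle_at A C B < pi / 2"

definition is_circumcenter :: "point \<Rightarrow> point \<Rightarrow> point \<Rightarrow> point \<Rightarrow> bool" where
  "is_circumcenter Z A B C \<longleftrightarrow> dist Z A = dist Z B \<and> dist Z B = dist Z C"

definition ellipse :: "point \<Rightarrow> real \<Rightarrow> real \<Rightarrow> real \<Rightarrow> point set" where
  "ellipse Z a b th =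
     {X. ((X - Z) \<bullet> vector [cos th, sin th])\<^sup>2 / a\<^sup>2
       + ((X - Z) \<bullet> vector [- sin th, cos th])\<^sup>2 / b\<^sup>2 = 1}"

definition tangent_to :: "point set \<Rightarrow> point set \<Rightarrow> bool" where
  "tangent_to L E \<longleftrightarrow> (\<exists>X. L \<inter> E = {X})"

definition circumscribed_about :: "point \<Rightarrow> point \<Rightarrow> point \<Rightarrow> point set \<Rightarrow> bool" where
  "circumscribed_about A B C E \<longleftrightarrow>
     tangent_to (sideline B C) E \<and> tangent_to (sideline C A) E \<and> tangent_to (sideline A B) E"

definition foot :: "point \<Rightarrow> point \<Rightarrow> point \<Rightarrow> point" where
  "foot P Q R = Q + (((P - Q) \<bullet> (R - Q)) / ((R - Q) \<bullet> (R - Q))) *\<^sub>R (R - Q)"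

definition is_incircle :: "point \<Rightarrow> point \<Rightarrow> point \<Rightarrow> point \<Rightarrow> real \<Rightarrow> bool" where
  "is_incircle P Q R I r \<longleftrightarrow> r > 0 \<and> I \<in> interior (convex hull {P, Q, R}) \<and>
     infdist I (sideline Q R) = r \<and> infdist I (sideline R P) = r \<and> infdist I (sideline P Q) = r"

definition inradius :: "point \<Rightarrow> point \<Rightarrow> point \<Rightarrow> real" where
  "inradius P Q R = (THE r. \<exists>I. is_incircle P Q R I r)"

end

theory Submission
  imports Defs
begin

text \<open>
  Put the circumcentre at the origin and let R be the circumradius. Then H = A + B + C is the
  orthocentre, and for an acute triangle it is the incentre of the orthic triangle: the orthic side
  through the feet on CA and AB is perpendicular to the radius OA, which puts it at distance
  (R^2 - |H|^2) / (4 R) from H.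

  In coordinates along the axes of the ellipse, tangency of the chord through two vertices becomes
  the bilinear relation (R^2 - c^2) x x' + (R^2 + c^2) y y' = (a^2 + b^2 - R^2) R^2, where
  c^2 = a^2 - b^2. The two relations at a vertex say that (x (R^2 - c^2), y (R^2 + c^2)) is
  normal to the opposite side, hence parallel to the sum of the other two vertices; so every vertex
  satisfies the same linear equation e x^2 = f. Three distinct points of the circle with equal |x| and equal
  |y| would give |H| = R, which acuteness excludes, so e = f = 0, and this forces R = a + b and
  |H| = a - b. The inradius is therefore ((a + b)^2 - (a - b)^2) / (4 (a + b)) = a b / (a + b).
\<close>

section \<open>Planar cross product and distances to lines\<close>

definition cross2 :: "point \<Rightarrow> point \<Rightarrow> real" where
  "cross2 u w = u$1 * w$2 - u$2 * w$1"

lemma inner_point: "(x::point) \<bullet> y = x$1 * y$1 + x$2 * y$2"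
  by (simp add: inner_vec_def sum_2)

lemma point_eqI: "(x::point)$1 = y$1 \<Longrightarrow> x$2 = y$2 \<Longrightarrow> x = y"
  by (simp add: vec_eq_iff forall_2)

lemma cross2_sq: "(cross2 u w)\<^sup>2 = (u \<bullet> u) * (w \<bullet> w) - (u \<bullet> w)\<^sup>2"
  by (simp add: cross2_def inner_point power2_eq_square algebra_simps)

lemma orthogonal_independent_pair_imp_zero:
  assumes "cross2 u w \<noteq> 0" "v \<bullet> u = 0" "v \<bullet> w = 0"
  shows "v = 0"
proof (rule point_eqI)
  have "v$1 * cross2 u w = w$2 * (v \<bullet> u) - u$2 * (v \<bullet> w)"
       "v$2 * cross2 u w = u$1 * (v \<bullet> w) - w$1 * (v \<bullet> u)"
    by (simp_all add: cross2_def inner_point algebra_simps)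
  then show "v$1 = 0$1" "v$2 = 0$2" using assms by simp_all
qed

lemma cross2_affine_combination:
  assumes "u + v + w = 1"
  shows "cross2 (R - Q) ((u *\<^sub>R P + v *\<^sub>R Q + w *\<^sub>R R) - Q) = u * cross2 (R - Q) (P - Q)"
proof -
  have v: "v = 1 - u - w" using assms by simp
  show ?thesis unfolding v by (simp add: cross2_def algebra_simps)
qed

lemma cross2_affine_combinations:
  assumes "u1 + v1 + w1 = 1" "u2 + v2 + w2 = 1" "u3 + v3 + w3 = 1"
  shows "cross2 ((u2 *\<^sub>R A + v2 *\<^sub>R B + w2 *\<^sub>R C) - (u1 *\<^sub>R A + v1 *\<^sub>R B + w1 *\<^sub>R C))
                ((u3 *\<^sub>R A + v3 *\<^sub>R B + w3 *\<^sub>R C) - (u1 *\<^sub>R A + v1 *\<^sub>R B + w1 *\<^sub>R C))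
       = (u1 * (v2 * w3 - w2 * v3) - v1 * (u2 * w3 - w2 * u3) + w1 * (u2 * v3 - v2 * u3))
         * cross2 (B - A) (C - A)"
proof -
  have u: "u1 = 1 - v1 - w1" "u2 = 1 - v2 - w2" "u3 = 1 - v3 - w3"
    using assms by simp_all
  show ?thesis
    unfolding u by (simp add: cross2_def algebra_simps)
qed

lemma cross2_eq_0_if_collinear:
  assumes "collinear {A, B, C}"
  shows "cross2 (B - A) (C - A) = 0"
proof -
  obtain u v where "\<forall>x\<in>{A, B, C}. \<exists>c. x = u + c *\<^sub>R v"
    using assms unfolding collinear_alt by blast
  then obtain ca cb cc where "A = u + ca *\<^sub>R v" "B = u + cb *\<^sub>R v" "C = u + cc *\<^sub>R v"
    by blast
  then show ?thesis
    by (simp add: cross2_def algebra_simps)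
qed

lemma sideline_eq_range: "sideline Q R = range (\<lambda>t. Q + t *\<^sub>R (R - Q))"
  unfolding sideline_def affine_hull_2
proof (intro set_eqI iffI)
  fix X
  assume "X \<in> {u *\<^sub>R Q + v *\<^sub>R R |u v. u + v = 1}"
  then obtain u v where "u + v = 1" "X = u *\<^sub>R Q + v *\<^sub>R R"
    by blast
  then have "X = Q + v *\<^sub>R (R - Q)"
    by (simp add: algebra_simps flip: scaleR_add_left)
  then show "X \<in> range (\<lambda>t. Q + t *\<^sub>R (R - Q))"
    by blast
next
  fix X
  assume "X \<in> range (\<lambda>t. Q + t *\<^sub>R (R - Q))"
  then obtain t where "X = Q + t *\<^sub>R (R - Q)"
    by blast
  then have "X = (1 - t) *\<^sub>R Q + t *\<^sub>R R"
    by (simp add: algebra_simps)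
  then show "X \<in> {u *\<^sub>R Q + v *\<^sub>R R |u v. u + v = 1}"
    by force
qed

lemma infdist_sideline:
  assumes "Q \<noteq> R"
  shows "infdist X (sideline Q R) = \<bar>cross2 (R - Q) (X - Q)\<bar> / norm (R - Q)"
proof -
  define w c p W where "w = R - Q" and "c = cross2 w (X - Q)" and "p = (X - Q) \<bullet> w"
    and "W = w \<bullet> w"
  define d where "d = \<bar>c\<bar> / norm w"
  have W: "W > 0" using assms by (simp add: W_def w_def)
  have d_sq: "d\<^sup>2 = c\<^sup>2 / W"
    by (simp add: d_def W_def power_divide power2_norm_eq_inner)
  have dist_sq: "(dist X (Q + t *\<^sub>R w))\<^sup>2 = d\<^sup>2 + (p - t * W)\<^sup>2 / W" for t
  proof -
    have "(dist X (Q + t *\<^sub>R w))\<^sup>2 * W = c\<^sup>2 + (p - t * W)\<^sup>2"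
      unfolding dist_norm power2_norm_eq_inner c_def p_def W_def
      by (simp add: cross2_def inner_point power2_eq_square algebra_simps)
    then show ?thesis
      using W by (simp add: d_sq field_simps)
  qed
  have lower: "d \<le> dist X Y" if on_line: "Y \<in> sideline Q R" for Y
  proof -
    obtain t where Y: "Y = Q + t *\<^sub>R w"
      using on_line unfolding sideline_eq_range w_def by auto
    have "0 \<le> (p - t * W)\<^sup>2 / W"
      using W by simp
    then have "d\<^sup>2 \<le> (dist X Y)\<^sup>2"
      unfolding Y dist_sq by linarith
    then show ?thesis
      by (rule power2_le_imp_le) simp
  qed
  define Y where "Y = Q + (p / W) *\<^sub>R w"
  have Y: "Y \<in> sideline Q R"
    unfolding Y_def sideline_eq_range w_def by blast
  have "(dist X Y)\<^sup>2 = d\<^sup>2"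
    using W unfolding Y_def dist_sq by simp
  then have "dist X Y = d"
    by (simp add: d_def power2_eq_iff_nonneg)
  then have "infdist X (sideline Q R) \<le> d"
    using infdist_le[OF Y, of X] by simp
  moreover have "d \<le> infdist X (sideline Q R)"
  proof -
    have nonempty: "sideline Q R \<noteq> {}"
      using Y by blast
    show ?thesis
      unfolding infdist_notempty[OF nonempty] by (rule cINF_greatest) (use nonempty lower in auto)
  qed
  ultimately have "infdist X (sideline Q R) = d"
    by (rule antisym)
  then show ?thesis
    unfolding d_def c_def w_def .
qed

lemma infdist_sideline_normal:
  assumes "Q \<noteq> R" "n \<noteq> 0" "(R - Q) \<bullet> n = 0"
  shows "infdist X (sideline Q R) = \<bar>(X - Q) \<bullet> n\<bar> / norm n"
proof -
  define w z where "w = R - Q" and "z = X - Q"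
  have wn: "w \<bullet> n = 0" using assms(3) by (simp add: w_def)
  have "\<bar>cross2 w z\<bar> * \<bar>cross2 w n\<bar> = \<bar>cross2 w z * cross2 w n\<bar>"
    by (rule abs_mult[symmetric])
  also have "cross2 w z * cross2 w n = (w \<bullet> w) * (z \<bullet> n) - (w \<bullet> z) * (w \<bullet> n)"
    by (simp add: cross2_def inner_point algebra_simps)
  also have "\<bar>\<dots>\<bar> = (norm w)\<^sup>2 * \<bar>z \<bullet> n\<bar>"
    by (simp add: wn power2_norm_eq_inner abs_mult)
  finally have "\<bar>cross2 w z\<bar> * \<bar>cross2 w n\<bar> = (norm w)\<^sup>2 * \<bar>z \<bullet> n\<bar>" .
  moreover have "\<bar>cross2 w n\<bar> = norm w * norm n"
    using cross2_sq[of w n]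
    by (simp add: wn norm_eq_sqrt_inner real_sqrt_mult flip: real_sqrt_abs)
  ultimately have "\<bar>cross2 w z\<bar> * norm n = norm w * \<bar>z \<bullet> n\<bar>"
    using assms(1) by (simp add: w_def power2_eq_square)
  then show ?thesis
    using assms(1,2) by (simp add: infdist_sideline w_def z_def field_simps)
qed

section \<open>Incircles\<close>

lemma is_incircle_inverse_radius:
  assumes "is_incircle P Q R I r"
  shows "1 / r = 1 / infdist P (sideline Q R) + 1 / infdist Q (sideline R P)
    + 1 / infdist R (sideline P Q)"
proof -
  have r: "0 < r" and I: "I \<in> interior (convex hull {P, Q, R})"
    and dist: "infdist I (sideline Q R) = r" "infdist I (sideline R P) = r"
      "infdist I (sideline P Q) = r"
    using assms unfolding is_incircle_def by auto
  have "P \<noteq> Q \<and> Q \<noteq> R \<and> R \<noteq> P"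
  proof (rule ccontr)
    assume "\<not> ?thesis"
    then have "card {P, Q, R} \<le> 2"
      by (auto simp: card_insert_if)
    then have "interior (convex hull {P, Q, R}) = {}"
      by (intro empty_interior_convex_hull) auto
    with I show False
      by blast
  qed
  then have distinct: "P \<noteq> Q" "Q \<noteq> R" "R \<noteq> P"
    by auto
  obtain u v w where uvw: "0 \<le> u" "0 \<le> v" "0 \<le> w" "u + v + w = 1"
    "I = u *\<^sub>R P + v *\<^sub>R Q + w *\<^sub>R R"
    using I interior_subset unfolding convex_hull_3 by blast
  have inverse: "1 / h = x / r" if "r = x * h" for x h
    using that r by auto
  have "r = u * infdist P (sideline Q R)"
    using dist(1) cross2_affine_combination[of u v w R Q P] uvw
    by (simp add: infdist_sideline distinct abs_mult)
  moreover have "r = v * infdist Q (sideline R P)"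
    using dist(2) cross2_affine_combination[of v w u P R Q] uvw
    by (simp add: infdist_sideline distinct abs_mult algebra_simps)
  moreover have "r = w * infdist R (sideline P Q)"
    using dist(3) cross2_affine_combination[of w u v Q P R] uvw
    by (simp add: infdist_sideline distinct abs_mult algebra_simps)
  ultimately have "1 / infdist P (sideline Q R) = u / r" "1 / infdist Q (sideline R P) = v / r"
    "1 / infdist R (sideline P Q) = w / r"
    using inverse by blast+
  then show ?thesis
    using uvw(4) by (simp add: add_divide_distrib[symmetric])
qed

lemma inradius_eqI:
  assumes "is_incircle P Q R I r"
  shows "inradius P Q R = r"
  unfolding inradius_def
proof (rule the_equality)
  show "\<exists>I. is_incircle P Q R I r"
    using assms by blast
next
  fix r'
  assume "\<exists>I. is_incircle P Q R I r'"
  then have "1 / r' = 1 / r"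
    using is_incircle_inverse_radius assms by metis
  then show "r' = r"
    by simp
qed

lemma infdist_translation:
  fixes Z X :: "'a::real_normed_vector"
  shows "infdist (Z + X) ((+) Z ` S) = infdist X S"
  by (simp add: infdist_def image_image dist_add_cancel)

lemma is_incircle_translation:
  "is_incircle (Z + P) (Z + Q) (Z + R) (Z + I) r \<longleftrightarrow> is_incircle P Q R I r"
proof -
  have "sideline (Z + X) (Z + Y) = (+) Z ` sideline X Y" for X Y
    unfolding sideline_def using affine_hull_translation[of Z "{X, Y}"] by simp
  moreover have "interior (convex hull {Z + P, Z + Q, Z + R})
      = (+) Z ` interior (convex hull {P, Q, R})"
    using convex_hull_translation[of Z "{P, Q, R}"] interior_translation[of Z] by simp
  ultimately show ?thesis
    by (simp add: is_incircle_def infdist_translation inj_image_mem_iff)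
qed

lemma inradius_translation: "inradius (Z + P) (Z + Q) (Z + R) = inradius P Q R"
proof -
  have "(\<exists>I. is_incircle (Z + P) (Z + Q) (Z + R) I r) \<longleftrightarrow> (\<exists>I. is_incircle P Q R I r)" for r
  proof
    assume "\<exists>I. is_incircle (Z + P) (Z + Q) (Z + R) I r"
    then obtain I where "is_incircle (Z + P) (Z + Q) (Z + R) (Z + (I - Z)) r"
      by auto
    then show "\<exists>I. is_incircle P Q R I r"
      unfolding is_incircle_translation by blast
  next
    assume "\<exists>I. is_incircle P Q R I r"
    then show "\<exists>I. is_incircle (Z + P) (Z + Q) (Z + R) I r"
      using is_incircle_translation by blast
  qed
  then show ?thesis
    by (simp add: inradius_def)
qed

section \<open>Acute triangles and their orthic triangles\<close>

lemma inner_pos_if_angle_less_pi2: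
  assumes "angle_at X V Y < pi / 2" "X \<noteq> V" "Y \<noteq> V"
  shows "0 < (X - V) \<bullet> (Y - V)"
proof -
  define c where "c = ((X - V) \<bullet> (Y - V)) / (norm (X - V) * norm (Y - V))"
  have norms: "0 < norm (X - V) * norm (Y - V)"
    using assms(2,3) by simp
  have "\<bar>(X - V) \<bullet> (Y - V)\<bar> \<le> norm (X - V) * norm (Y - V)"
    by (rule Cauchy_Schwarz_ineq2)
  then have "\<bar>c\<bar> \<le> 1"
    using norms by (simp add: c_def abs_divide divide_le_eq_1_pos)
  moreover have "arccos c < arccos 0"
    using assms(1) by (simp add: angle_at_def c_def)
  ultimately have "0 < c"
    using arccos_less_mono[of c 0] by simp
  then show ?thesis
    using norms by (simp add: c_def zero_less_divide_iff)
qed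

lemma acute_triangle_inner_pos:
  assumes "acute_triangle A B C"
  shows "0 < (B - A) \<bullet> (C - A)" "0 < (A - B) \<bullet> (C - B)" "0 < (A - C) \<bullet> (B - C)"
proof -
  have "\<not> collinear {A, B, C}"
    using assms by (simp add: acute_triangle_def nondegenerate_triangle_def)
  then have "A \<noteq> B" "B \<noteq> C" "C \<noteq> A"
    by (auto simp: collinear_2 insert_commute)
  then show "0 < (B - A) \<bullet> (C - A)" "0 < (A - B) \<bullet> (C - B)" "0 < (A - C) \<bullet> (B - C)"
    using assms by (auto simp: acute_triangle_def intro!: inner_pos_if_angle_less_pi2)
qed

lemma foot_commute: "foot P Q R = foot P R Q"
proof (cases "Q = R")
  case False
  define p W where "p = (P - Q) \<bullet> (R - Q)" and "W = (R - Q) \<bullet> (R - Q)"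
  have W: "W \<noteq> 0" using False by (simp add: W_def)
  have pR: "(P - R) \<bullet> (Q - R) = W - p" and WR: "(Q - R) \<bullet> (Q - R) = W"
    by (simp_all add: p_def W_def inner_diff_left inner_diff_right inner_commute)
  have "foot P R Q = R + ((W - p) / W) *\<^sub>R (Q - R)"
    unfolding foot_def pR WR ..
  also have "\<dots> = Q + (p / W) *\<^sub>R (R - Q)"
    using W by (simp add: diff_divide_distrib scaleR_diff_left algebra_simps)
  also have "\<dots> = foot P Q R"
    unfolding foot_def p_def W_def ..
  finally show ?thesis ..
qed simp

lemma foot_translation: "foot (Z + P) (Z + Q) (Z + R) = Z + foot P Q R"
  by (simp add: foot_def)

lemma foot_barycentric:
  "((P - Q) \<bullet> (R - Q) + (P - R) \<bullet> (Q - R)) *\<^sub>R foot P Q R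
     = ((P - R) \<bullet> (Q - R)) *\<^sub>R Q + ((P - Q) \<bullet> (R - Q)) *\<^sub>R R"
proof (cases "Q = R")
  case False
  define p W where "p = (P - Q) \<bullet> (R - Q)" and "W = (R - Q) \<bullet> (R - Q)"
  have W: "W \<noteq> 0" using False by (simp add: W_def)
  have pR: "(P - R) \<bullet> (Q - R) = W - p"
    by (simp add: p_def W_def inner_diff_left inner_diff_right inner_commute)
  have "W *\<^sub>R foot P Q R = W *\<^sub>R Q + p *\<^sub>R (R - Q)"
    using W unfolding foot_def p_def[symmetric] W_def[symmetric] by (simp add: scaleR_add_right)
  then show ?thesis
    unfolding pR p_def[symmetric] by (simp add: algebra_simps)
qed simp

lemma foot_eq_affine_combination:
  fixes A B C :: point
  defines "\<beta> \<equiv> (A - B) \<bullet> (C - B)" and "\<gamma> \<equiv> (A - C) \<bullet> (B - C)"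
  assumes "\<beta> + \<gamma> \<noteq> 0"
  shows "foot A B C = 0 *\<^sub>R A + (\<gamma> / (\<beta> + \<gamma>)) *\<^sub>R B + (\<beta> / (\<beta> + \<gamma>)) *\<^sub>R C"
proof -
  have "foot A B C = (1 / (\<beta> + \<gamma>)) *\<^sub>R ((\<beta> + \<gamma>) *\<^sub>R foot A B C)"
    using assms(3) by simp
  also have "(\<beta> + \<gamma>) *\<^sub>R foot A B C = \<gamma> *\<^sub>R B + \<beta> *\<^sub>R C"
    using foot_barycentric[of A B C] by (simp add: \<beta>_def \<gamma>_def)
  finally show ?thesis
    by (simp add: scaleR_add_right)
qed

lemma cross2_sq_eq_inner_products:
  fixes A B C :: point
  defines "\<alpha> \<equiv> (B - A) \<bullet> (C - A)" and "\<beta> \<equiv> (A - B) \<bullet> (C - B)" and "\<gamma> \<equiv> (A - C) \<bullet> (B - C)"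
  shows "(cross2 (B - A) (C - A))\<^sup>2 = \<alpha> * \<beta> + \<beta> * \<gamma> + \<gamma> * \<alpha>"
  unfolding \<alpha>_def \<beta>_def \<gamma>_def
  by (simp add: cross2_def inner_point power2_eq_square algebra_simps)

lemma cross2_ne_0_if_inner_pos:
  fixes A B C :: point
  assumes "0 < (B - A) \<bullet> (C - A)" "0 < (A - B) \<bullet> (C - B)" "0 < (A - C) \<bullet> (B - C)"
  shows "cross2 (B - A) (C - A) \<noteq> 0"
proof -
  have "0 < (B - A) \<bullet> (C - A) * ((A - B) \<bullet> (C - B)) + (A - B) \<bullet> (C - B) * ((A - C) \<bullet> (B - C))
      + (A - C) \<bullet> (B - C) * ((B - A) \<bullet> (C - A))"
    using assms by (intro add_pos_pos mult_pos_pos)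
  then have "0 < (cross2 (B - A) (C - A))\<^sup>2"
    by (simp only: cross2_sq_eq_inner_products)
  then show ?thesis
    by auto
qed

lemma orthic_triangle_cross2:
  fixes A B C :: point
  defines "\<alpha> \<equiv> (B - A) \<bullet> (C - A)" and "\<beta> \<equiv> (A - B) \<bullet> (C - B)" and "\<gamma> \<equiv> (A - C) \<bullet> (B - C)"
  assumes "\<alpha> + \<beta> \<noteq> 0" "\<beta> + \<gamma> \<noteq> 0" "\<gamma> + \<alpha> \<noteq> 0"
  shows "cross2 (foot B C A - foot A B C) (foot C A B - foot A B C)
       = 2 * \<alpha> * \<beta> * \<gamma> / ((\<alpha> + \<beta>) * (\<beta> + \<gamma>) * (\<gamma> + \<alpha>)) * cross2 (B - A) (C - A)"
proof -
  have A: "foot A B C = 0 *\<^sub>R A + (\<gamma> / (\<beta> + \<gamma>)) *\<^sub>R B + (\<beta> / (\<beta> + \<gamma>)) *\<^sub>R C"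
    using foot_eq_affine_combination[of A B C] assms(5) by (simp add: \<beta>_def \<gamma>_def)
  have B: "foot B C A = (\<gamma> / (\<gamma> + \<alpha>)) *\<^sub>R A + 0 *\<^sub>R B + (\<alpha> / (\<gamma> + \<alpha>)) *\<^sub>R C"
    using foot_eq_affine_combination[of B C A] assms(6)
    by (simp add: \<alpha>_def \<gamma>_def inner_commute add.commute)
  have C: "foot C A B = (\<beta> / (\<alpha> + \<beta>)) *\<^sub>R A + (\<alpha> / (\<alpha> + \<beta>)) *\<^sub>R B + 0 *\<^sub>R C"
    using foot_eq_affine_combination[of C A B] assms(4)
    by (simp add: \<alpha>_def \<beta>_def inner_commute add.commute)
  have "0 + \<gamma> / (\<beta> + \<gamma>) + \<beta> / (\<beta> + \<gamma>) = 1"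
    "\<gamma> / (\<gamma> + \<alpha>) + 0 + \<alpha> / (\<gamma> + \<alpha>) = 1"
    "\<beta> / (\<alpha> + \<beta>) + \<alpha> / (\<alpha> + \<beta>) + 0 = 1"
    using assms(4-6) by (simp_all add: add_divide_distrib[symmetric] add_ac)
  then show ?thesis
    unfolding A B C using assms(4-6)
    by (subst cross2_affine_combinations) (simp_all add: field_simps)
qed

lemma inner_foot_on_circle:
  assumes "A \<bullet> A = K" "B \<bullet> B = K"
  shows "foot C A B \<bullet> A = K - (B - A) \<bullet> (C - A) / 2"
proof (cases "A = B")
  case False
  define W where "W = (B - A) \<bullet> (B - A)"
  have W: "W \<noteq> 0" using False by (simp add: W_def)
  have "(B - A) \<bullet> A = - W / 2"
    using assms by (simp add: W_def inner_diff_left inner_diff_right inner_commute)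
  then show ?thesis
    using W assms(1) by (simp add: foot_def inner_add_right W_def[symmetric] inner_commute)
qed (use assms in \<open>simp add: foot_def\<close>)

text \<open>With \<alpha> = |AB| |AC| cos A etc., these are the barycentric coordinates tan A : tan B : tan C
  of the orthocentre.\<close>

lemma orthocenter_barycentric_on_circle:
  fixes A B C :: point
  defines "\<alpha> \<equiv> (B - A) \<bullet> (C - A)" and "\<beta> \<equiv> (A - B) \<bullet> (C - B)" and "\<gamma> \<equiv> (A - C) \<bullet> (B - C)"
  assumes "A \<bullet> A = K" "B \<bullet> B = K" "C \<bullet> C = K" "cross2 (B - A) (C - A) \<noteq> 0"
  shows "A + B + C = (\<beta> * \<gamma> / (\<alpha> * \<beta> + \<beta> * \<gamma> + \<gamma> * \<alpha>)) *\<^sub>R A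
    + (\<gamma> * \<alpha> / (\<alpha> * \<beta> + \<beta> * \<gamma> + \<gamma> * \<alpha>)) *\<^sub>R B
    + (\<alpha> * \<beta> / (\<alpha> * \<beta> + \<beta> * \<gamma> + \<gamma> * \<alpha>)) *\<^sub>R C"
proof -
  define S where "S = \<alpha> * \<beta> + \<beta> * \<gamma> + \<gamma> * \<alpha>"
  have "S = (cross2 (B - A) (C - A))\<^sup>2"
    unfolding S_def \<alpha>_def \<beta>_def \<gamma>_def by (rule cross2_sq_eq_inner_products[symmetric])
  then have S: "S \<noteq> 0"
    using assms(7) by simp
  have dots: "A \<bullet> B = K - (\<alpha> + \<beta>) / 2" "B \<bullet> C = K - (\<beta> + \<gamma>) / 2"
    "C \<bullet> A = K - (\<gamma> + \<alpha>) / 2"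
    using assms(4-6) by (simp_all add: \<alpha>_def \<beta>_def \<gamma>_def inner_diff_left inner_diff_right
        inner_commute field_simps)
  define V where "V = S *\<^sub>R (A + B + C)
       - ((\<beta> * \<gamma>) *\<^sub>R A + (\<gamma> * \<alpha>) *\<^sub>R B + (\<alpha> * \<beta>) *\<^sub>R C)"
  have "V \<bullet> (B - A) = 0" "V \<bullet> (C - A) = 0"
    unfolding V_def S_def
    by (simp_all add: inner_diff_left inner_add_left inner_diff_right inner_add_right assms(4-6)
        dots inner_commute[of B A] inner_commute[of C B] inner_commute[of A C] algebra_simps)
       (simp_all add: field_simps)
  then have "V = 0"
    using orthogonal_independent_pair_imp_zero assms(7) by blast
  have "A + B + C = (1 / S) *\<^sub>R (S *\<^sub>R (A + B + C))"
    using S by simp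
  also have "S *\<^sub>R (A + B + C) = (\<beta> * \<gamma>) *\<^sub>R A + (\<gamma> * \<alpha>) *\<^sub>R B + (\<alpha> * \<beta>) *\<^sub>R C"
    using \<open>V = 0\<close> by (simp add: V_def)
  finally show ?thesis
    by (simp add: S_def scaleR_add_right)
qed

lemma inner_convex_combination_on_circle:
  fixes A B C :: "'a::real_inner"
  assumes "A \<bullet> A = K" "B \<bullet> B = K" "C \<bullet> C = K" "l1 + l2 + l3 = 1"
  shows "K - (l1 *\<^sub>R A + l2 *\<^sub>R B + l3 *\<^sub>R C) \<bullet> (l1 *\<^sub>R A + l2 *\<^sub>R B + l3 *\<^sub>R C)
       = l1 * l2 * ((A - B) \<bullet> (A - B)) + l2 * l3 * ((B - C) \<bullet> (B - C))
         + l3 * l1 * ((C - A) \<bullet> (C - A))"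
proof -
  have l3: "l3 = 1 - l1 - l2" using assms(4) by simp
  show ?thesis
    unfolding l3
    by (simp add: inner_diff_left inner_add_left inner_diff_right inner_add_right assms(1-3)
        inner_commute[of B A] inner_commute[of C B] inner_commute[of C A] algebra_simps)
qed

lemma orthocenter_inside_circumcircle:
  fixes A B C :: point
  defines "\<alpha> \<equiv> (B - A) \<bullet> (C - A)" and "\<beta> \<equiv> (A - B) \<bullet> (C - B)" and "\<gamma> \<equiv> (A - C) \<bullet> (B - C)"
  assumes "A \<bullet> A = K" "B \<bullet> B = K" "C \<bullet> C = K" "0 < \<alpha>" "0 < \<beta>" "0 < \<gamma>"
  shows "(A + B + C) \<bullet> (A + B + C) < K"
proof -
  define S where "S = \<alpha> * \<beta> + \<beta> * \<gamma> + \<gamma> * \<alpha>"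
  have S: "0 < S"
    using assms(7-9) by (simp add: S_def add_pos_pos)
  have "cross2 (B - A) (C - A) \<noteq> 0"
    using cross2_ne_0_if_inner_pos assms(7-9) by (simp add: \<alpha>_def \<beta>_def \<gamma>_def)
  then have H: "A + B + C = (\<beta> * \<gamma> / S) *\<^sub>R A + (\<gamma> * \<alpha> / S) *\<^sub>R B + (\<alpha> * \<beta> / S) *\<^sub>R C"
    using orthocenter_barycentric_on_circle[where A = A and B = B and C = C] assms(4-6)
    by (simp add: S_def \<alpha>_def \<beta>_def \<gamma>_def)
  have "\<beta> * \<gamma> / S + \<gamma> * \<alpha> / S + \<alpha> * \<beta> / S = (\<beta> * \<gamma> + \<gamma> * \<alpha> + \<alpha> * \<beta>) / S"
    by (simp add: add_divide_distrib)
  also have "\<dots> = 1"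
    using S by (simp add: S_def algebra_simps)
  finally have sum: "\<beta> * \<gamma> / S + \<gamma> * \<alpha> / S + \<alpha> * \<beta> / S = 1" .
  have sides: "(A - B) \<bullet> (A - B) = \<alpha> + \<beta>" "(B - C) \<bullet> (B - C) = \<beta> + \<gamma>"
    "(C - A) \<bullet> (C - A) = \<gamma> + \<alpha>"
    by (simp_all add: \<alpha>_def \<beta>_def \<gamma>_def inner_diff_left inner_diff_right inner_commute)
  have "0 < (\<beta> * \<gamma> / S) * (\<gamma> * \<alpha> / S) * (\<alpha> + \<beta>) + (\<gamma> * \<alpha> / S) * (\<alpha> * \<beta> / S) * (\<beta> + \<gamma>)
      + (\<alpha> * \<beta> / S) * (\<beta> * \<gamma> / S) * (\<gamma> + \<alpha>)"
    using S assms(7-9) by (intro add_pos_pos mult_pos_pos divide_pos_pos) simp_all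
  then show ?thesis
    using inner_convex_combination_on_circle[OF assms(4-6) sum] unfolding sides H[symmetric]
    by linarith
qed

lemma orthic_triangle_interior:
  fixes A B C :: point
  defines "\<alpha> \<equiv> (B - A) \<bullet> (C - A)" and "\<beta> \<equiv> (A - B) \<bullet> (C - B)" and "\<gamma> \<equiv> (A - C) \<bullet> (B - C)"
  assumes "A \<bullet> A = K" "B \<bullet> B = K" "C \<bullet> C = K" "0 < \<alpha>" "0 < \<beta>" "0 < \<gamma>"
  shows "\<not> collinear {foot A B C, foot B C A, foot C A B}"
    and "A + B + C \<in> interior (convex hull {foot A B C, foot B C A, foot C A B})"
proof -
  define S where "S = \<alpha> * \<beta> + \<beta> * \<gamma> + \<gamma> * \<alpha>"
  have S: "0 < S"
    using assms(7-9) by (simp add: S_def add_pos_pos)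
  have cross: "cross2 (B - A) (C - A) \<noteq> 0"
    using cross2_ne_0_if_inner_pos assms(7-9) by (simp add: \<alpha>_def \<beta>_def \<gamma>_def)
  have "cross2 (foot B C A - foot A B C) (foot C A B - foot A B C) \<noteq> 0"
    using orthic_triangle_cross2[where A = A and B = B and C = C] cross assms(7-9)
    by (simp add: \<alpha>_def \<beta>_def \<gamma>_def)
  then show noncollinear: "\<not> collinear {foot A B C, foot B C A, foot C A B}"
    using cross2_eq_0_if_collinear by blast
  have feet: "(\<beta> + \<gamma>) *\<^sub>R foot A B C = \<gamma> *\<^sub>R B + \<beta> *\<^sub>R C"
    "(\<gamma> + \<alpha>) *\<^sub>R foot B C A = \<alpha> *\<^sub>R C + \<gamma> *\<^sub>R A"
    "(\<alpha> + \<beta>) *\<^sub>R foot C A B = \<beta> *\<^sub>R A + \<alpha> *\<^sub>R B"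
    using foot_barycentric[of A B C] foot_barycentric[of B C A] foot_barycentric[of C A B]
    by (simp_all add: \<alpha>_def \<beta>_def \<gamma>_def inner_commute add.commute)
  \<comment> \<open>The weights are proportional to the sides |BC| cos A, |CA| cos B, |AB| cos C of the orthic
    triangle, as they must be for its incentre.\<close>
  define x1 x2 x3 where "x1 = \<alpha> * (\<beta> + \<gamma>) / (2 * S)" and "x2 = \<beta> * (\<gamma> + \<alpha>) / (2 * S)"
    and "x3 = \<gamma> * (\<alpha> + \<beta>) / (2 * S)"
  have "x1 *\<^sub>R foot A B C = (\<alpha> / (2 * S)) *\<^sub>R ((\<beta> + \<gamma>) *\<^sub>R foot A B C)"
    "x2 *\<^sub>R foot B C A = (\<beta> / (2 * S)) *\<^sub>R ((\<gamma> + \<alpha>) *\<^sub>R foot B C A)"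
    "x3 *\<^sub>R foot C A B = (\<gamma> / (2 * S)) *\<^sub>R ((\<alpha> + \<beta>) *\<^sub>R foot C A B)"
    by (simp_all add: x1_def x2_def x3_def)
  then have "x1 *\<^sub>R foot A B C + x2 *\<^sub>R foot B C A + x3 *\<^sub>R foot C A B
      = (\<beta> * \<gamma> / S) *\<^sub>R A + (\<gamma> * \<alpha> / S) *\<^sub>R B + (\<alpha> * \<beta> / S) *\<^sub>R C"
    unfolding feet using S by (intro point_eqI) (simp_all add: field_simps)
  also have "\<dots> = A + B + C"
    using orthocenter_barycentric_on_circle[where A = A and B = B and C = C] assms(4-6) cross
    by (simp add: S_def \<alpha>_def \<beta>_def \<gamma>_def)
  finally have "x1 *\<^sub>R foot A B C + x2 *\<^sub>R foot B C A + x3 *\<^sub>R foot C A B = A + B + C" .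
  moreover have "0 < x1" "0 < x2" "0 < x3"
    using S assms(7-9) unfolding x1_def x2_def x3_def
    by (auto intro!: divide_pos_pos mult_pos_pos add_pos_pos)
  moreover have "x1 + x2 + x3 = (\<alpha> * (\<beta> + \<gamma>) + \<beta> * (\<gamma> + \<alpha>) + \<gamma> * (\<alpha> + \<beta>)) / (2 * S)"
    by (simp add: x1_def x2_def x3_def add_divide_distrib)
  then have "x1 + x2 + x3 = 1"
    using S by (simp add: S_def algebra_simps)
  ultimately show "A + B + C \<in> interior (convex hull {foot A B C, foot B C A, foot C A B})"
    by (subst interior_convex_hull_3_minimal[OF noncollinear]) auto
qed

lemma infdist_orthocenter_orthic_side:
  assumes "A \<bullet> A = K" "B \<bullet> B = K" "C \<bullet> C = K" "0 < K" "foot B C A \<noteq> foot C A B"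
  shows "infdist (A + B + C) (sideline (foot B C A) (foot C A B))
       = \<bar>K - (A + B + C) \<bullet> (A + B + C)\<bar> / (4 * sqrt K)"
proof -
  have HB: "foot B C A \<bullet> A = K - (C - A) \<bullet> (B - A) / 2"
    using inner_foot_on_circle[of A K C B] assms(1,3) by (simp add: foot_commute[of B C A])
  have HC: "foot C A B \<bullet> A = K - (B - A) \<bullet> (C - A) / 2"
    using inner_foot_on_circle[of A K B C] assms(1,2) by simp
  \<comment> \<open>The orthic side is antiparallel to BC, i.e. perpendicular to the radius towards A.\<close>
  have "(foot C A B - foot B C A) \<bullet> A = foot C A B \<bullet> A - foot B C A \<bullet> A"
    by (rule inner_diff_left)
  also have "\<dots> = 0"
    unfolding HB HC inner_commute[of "C - A" "B - A"] by simp
  finally have "(foot C A B - foot B C A) \<bullet> A = 0" .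
  moreover have "A \<noteq> 0" "norm A = sqrt K"
    using assms(1,4) by (auto simp: norm_eq_sqrt_inner)
  ultimately have "infdist (A + B + C) (sideline (foot B C A) (foot C A B))
      = \<bar>(A + B + C - foot B C A) \<bullet> A\<bar> / sqrt K"
    using infdist_sideline_normal[OF assms(5)] by simp
  also have "(A + B + C - foot B C A) \<bullet> A = ((A + B + C) \<bullet> (A + B + C) - K) / 4"
    unfolding inner_diff_left HB
    by (simp add: inner_add_left inner_add_right inner_diff_left inner_diff_right assms(1-3)
        inner_commute[of B A] inner_commute[of C B] inner_commute[of C A] field_simps)
  finally show ?thesis
    by (simp add: abs_minus_commute)
qed

lemma inradius_orthic_triangle_on_circle:
  fixes A B C :: point
  defines "\<alpha> \<equiv> (B - A) \<bullet> (C - A)" and "\<beta> \<equiv> (A - B) \<bullet> (C - B)" and "\<gamma> \<equiv> (A - C) \<bullet> (B - C)"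
  assumes "A \<bullet> A = K" "B \<bullet> B = K" "C \<bullet> C = K" "0 < \<alpha>" "0 < \<beta>" "0 < \<gamma>"
  shows "inradius (foot A B C) (foot B C A) (foot C A B)
    = (K - (A + B + C) \<bullet> (A + B + C)) / (4 * sqrt K)"
proof -
  let ?H = "A + B + C"
  have inside: "?H \<bullet> ?H < K"
    using orthocenter_inside_circumcircle[where A = A and B = B and C = C] assms(4-9)
    by (simp add: \<alpha>_def \<beta>_def \<gamma>_def)
  then have K: "0 < K"
    using inner_ge_zero[of ?H] by linarith
  have noncollinear: "\<not> collinear {foot A B C, foot B C A, foot C A B}"
    and interior: "?H \<in> interior (convex hull {foot A B C, foot B C A, foot C A B})"
    using orthic_triangle_interior[where A = A and B = B and C = C] assms(4-9)
    by (simp_all add: \<alpha>_def \<beta>_def \<gamma>_def)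
  have distinct: "foot A B C \<noteq> foot B C A" "foot B C A \<noteq> foot C A B" "foot C A B \<noteq> foot A B C"
    using noncollinear by (auto simp: collinear_2 insert_commute)
  have "infdist ?H (sideline (foot B C A) (foot C A B)) = (K - ?H \<bullet> ?H) / (4 * sqrt K)"
    "infdist ?H (sideline (foot C A B) (foot A B C)) = (K - ?H \<bullet> ?H) / (4 * sqrt K)"
    "infdist ?H (sideline (foot A B C) (foot B C A)) = (K - ?H \<bullet> ?H) / (4 * sqrt K)"
    using infdist_orthocenter_orthic_side[of A K B C] infdist_orthocenter_orthic_side[of B K C A]
      infdist_orthocenter_orthic_side[of C K A B] assms(4-6) K distinct inside
    by (simp_all add: add_ac)
  then have "is_incircle (foot A B C) (foot B C A) (foot C A B) ?H ((K - ?H \<bullet> ?H) / (4 * sqrt K))"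
    using inside K interior by (simp add: is_incircle_def)
  then show ?thesis
    by (rule inradius_eqI)
qed

lemma inradius_orthic_triangle:
  fixes A B C Z :: point
  defines "H \<equiv> (A - Z) + (B - Z) + (C - Z)"
  assumes "(A - Z) \<bullet> (A - Z) = K" "(B - Z) \<bullet> (B - Z) = K" "(C - Z) \<bullet> (C - Z) = K"
    and "0 < (B - A) \<bullet> (C - A)" "0 < (A - B) \<bullet> (C - B)" "0 < (A - C) \<bullet> (B - C)"
  shows "inradius (foot A B C) (foot B C A) (foot C A B) = (K - H \<bullet> H) / (4 * sqrt K)"
proof -
  have "foot A B C = Z + foot (A - Z) (B - Z) (C - Z)"
    "foot B C A = Z + foot (B - Z) (C - Z) (A - Z)" "foot C A B = Z + foot (C - Z) (A - Z) (B - Z)"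
    by (simp_all flip: foot_translation)
  then show ?thesis
    using inradius_orthic_triangle_on_circle[where A = "A - Z" and B = "B - Z" and C = "C - Z"]
      assms
    by (simp add: inradius_translation)
qed

lemma is_circumcenter_inner_eq:
  assumes "is_circumcenter Z A B C"
  shows "(B - Z) \<bullet> (B - Z) = (A - Z) \<bullet> (A - Z)" "(C - Z) \<bullet> (C - Z) = (A - Z) \<bullet> (A - Z)"
proof -
  have "(dist Z X)\<^sup>2 = (X - Z) \<bullet> (X - Z)" for X
    by (simp add: dist_norm power2_norm_eq_inner norm_minus_commute)
  then show "(B - Z) \<bullet> (B - Z) = (A - Z) \<bullet> (A - Z)" "(C - Z) \<bullet> (C - Z) = (A - Z) \<bullet> (A - Z)"
    using assms unfolding is_circumcenter_def by metis+
qed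

section \<open>Tangent lines of an ellipse\<close>

definition major_coord :: "real \<Rightarrow> point \<Rightarrow> real" where
  "major_coord th v = v \<bullet> vector [cos th, sin th]"

definition minor_coord :: "real \<Rightarrow> point \<Rightarrow> real" where
  "minor_coord th v = v \<bullet> vector [- sin th, cos th]"

lemma major_minor_coord_inner:
  "major_coord th u * major_coord th v + minor_coord th u * minor_coord th v = u \<bullet> v"
proof -
  have "major_coord th u * major_coord th v + minor_coord th u * minor_coord th v
      = (u$1 * v$1 + u$2 * v$2) * (cos th * cos th + sin th * sin th)"
    by (simp add: major_coord_def minor_coord_def inner_point algebra_simps
        del: sin_cos_squared_add3)
  also have "cos th * cos th + sin th * sin th = 1"
    by simp
  finally show ?thesis
    by (simp add: inner_point)
qed

lemma quadratic_unique_root_discriminant: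
  fixes p q c t0 :: real
  assumes "p \<noteq> 0" "\<And>t. p * t\<^sup>2 + 2 * q * t + c = 0 \<longleftrightarrow> t = t0"
  shows "q\<^sup>2 = p * c"
proof -
  define t1 where "t1 = - 2 * q / p - t0"
  have "p * t1\<^sup>2 + 2 * q * t1 + c = p * t0\<^sup>2 + 2 * q * t0 + c"
    using assms(1) by (simp add: t1_def power2_eq_square field_simps)
  also have "\<dots> = 0"
    using assms(2) by simp
  finally have "t1 = t0"
    using assms(2) by blast
  then have vertex: "p * t0 = - q"
    using assms(1) by (simp add: t1_def field_simps)
  have "(p * t0)\<^sup>2 + 2 * q * (p * t0) + p * c = p * (p * t0\<^sup>2 + 2 * q * t0 + c)"
    by (simp add: power2_eq_square algebra_simps)
  also have "\<dots> = 0"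
    using assms(2) by simp
  finally show ?thesis
    unfolding vertex by (simp add: power2_eq_square)
qed

lemma tangent_sideline_ellipse:
  assumes "B \<noteq> C" "0 < a" "0 < b" "tangent_to (sideline B C) (ellipse Z a b th)"
  defines "x1 \<equiv> major_coord th (B - Z)" and "y1 \<equiv> minor_coord th (B - Z)"
    and "x2 \<equiv> major_coord th (C - Z)" and "y2 \<equiv> minor_coord th (C - Z)"
  shows "(x1 * y2 - y1 * x2)\<^sup>2 = b\<^sup>2 * (x2 - x1)\<^sup>2 + a\<^sup>2 * (y2 - y1)\<^sup>2"
proof -
  \<comment> \<open>Restricted to the line t \<mapsto> B + t (C - B), the ellipse equation becomes
    p t^2 + 2 q t + c = 0; tangency means a double root, i.e. q^2 = p c.\<close>
  define p q c where "p = b\<^sup>2 * (x2 - x1)\<^sup>2 + a\<^sup>2 * (y2 - y1)\<^sup>2"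
    and "q = b\<^sup>2 * x1 * (x2 - x1) + a\<^sup>2 * y1 * (y2 - y1)"
    and "c = b\<^sup>2 * x1\<^sup>2 + a\<^sup>2 * y1\<^sup>2 - a\<^sup>2 * b\<^sup>2"
  have normalize: "u / a\<^sup>2 + v / b\<^sup>2 = 1 \<longleftrightarrow> b\<^sup>2 * u + a\<^sup>2 * v = a\<^sup>2 * b\<^sup>2" for u v
  proof -
    have "u / a\<^sup>2 + v / b\<^sup>2 = (b\<^sup>2 * u + a\<^sup>2 * v) / (a\<^sup>2 * b\<^sup>2)"
      using assms(2,3) by (simp add: field_simps)
    then show ?thesis
      using assms(2,3) by auto
  qed
  have on_ellipse: "B + t *\<^sub>R (C - B) \<in> ellipse Z a b th \<longleftrightarrow> p * t\<^sup>2 + 2 * q * t + c = 0" for t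
  proof -
    have "major_coord th (B + t *\<^sub>R (C - B) - Z) = x1 + t * (x2 - x1)"
      "minor_coord th (B + t *\<^sub>R (C - B) - Z) = y1 + t * (y2 - y1)"
      by (simp_all add: x1_def x2_def y1_def y2_def major_coord_def minor_coord_def
          inner_diff_left inner_add_left algebra_simps)
    then have "B + t *\<^sub>R (C - B) \<in> ellipse Z a b th
        \<longleftrightarrow> (x1 + t * (x2 - x1))\<^sup>2 / a\<^sup>2 + (y1 + t * (y2 - y1))\<^sup>2 / b\<^sup>2 = 1"
      by (simp add: ellipse_def major_coord_def minor_coord_def)
    also have "\<dots> \<longleftrightarrow> b\<^sup>2 * (x1 + t * (x2 - x1))\<^sup>2 + a\<^sup>2 * (y1 + t * (y2 - y1))\<^sup>2 = a\<^sup>2 * b\<^sup>2"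
      by (rule normalize)
    also have "\<dots> \<longleftrightarrow> p * t\<^sup>2 + 2 * q * t + c = 0"
      by (simp add: p_def q_def c_def power2_eq_square algebra_simps)
    finally show ?thesis .
  qed
  obtain X0 where X0: "sideline B C \<inter> ellipse Z a b th = {X0}"
    using assms(4) unfolding tangent_to_def by blast
  then have "X0 \<in> range (\<lambda>t. B + t *\<^sub>R (C - B))" and X0_on: "X0 \<in> ellipse Z a b th"
    unfolding sideline_eq_range[symmetric] by auto
  then obtain t0 where t0: "X0 = B + t0 *\<^sub>R (C - B)"
    by auto
  have "p * t\<^sup>2 + 2 * q * t + c = 0 \<longleftrightarrow> t = t0" for t
  proof
    assume "p * t\<^sup>2 + 2 * q * t + c = 0"
    then have "B + t *\<^sub>R (C - B) \<in> ellipse Z a b th"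
      by (simp add: on_ellipse)
    moreover have "B + t *\<^sub>R (C - B) \<in> sideline B C"
      unfolding sideline_eq_range by (rule rangeI)
    ultimately have "B + t *\<^sub>R (C - B) = X0"
      using X0 by auto
    then show "t = t0"
      using assms(1) by (simp add: t0)
  next
    assume "t = t0"
    then show "p * t\<^sup>2 + 2 * q * t + c = 0"
      using X0_on by (simp add: t0 on_ellipse)
  qed
  moreover have "p \<noteq> 0"
  proof
    assume "p = 0"
    then have "x2 - x1 = 0" "y2 - y1 = 0"
      using assms(2,3) by (simp_all add: p_def add_nonneg_eq_0_iff)
    then have "(C - B) \<bullet> (C - B) = 0"
      using major_minor_coord_inner[of th "C - B" "C - B"]
      by (simp add: x1_def x2_def y1_def y2_def major_coord_def minor_coord_def inner_diff_left)
    with assms(1) show False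
      by simp
  qed
  ultimately have "q\<^sup>2 = p * c"
    using quadratic_unique_root_discriminant by blast
  moreover have "p * c - q\<^sup>2 = a\<^sup>2 * b\<^sup>2 * ((x1 * y2 - y1 * x2)\<^sup>2 - p)"
    by (simp add: p_def q_def c_def power2_eq_square algebra_simps)
  ultimately show ?thesis
    using assms(2,3) by (simp add: p_def)
qed

section \<open>The concentric Poncelet configuration\<close>

lemma chord_tangency_bilinear:
  fixes x1 y1 x2 y2 a b K :: real
  assumes "x1\<^sup>2 + y1\<^sup>2 = K" "x2\<^sup>2 + y2\<^sup>2 = K" "(x1, y1) \<noteq> (x2, y2)"
    and "(x1 * y2 - y1 * x2)\<^sup>2 = b\<^sup>2 * (x2 - x1)\<^sup>2 + a\<^sup>2 * (y2 - y1)\<^sup>2"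
  shows "(K - (a\<^sup>2 - b\<^sup>2)) * x1 * x2 + (K + (a\<^sup>2 - b\<^sup>2)) * y1 * y2 = (a\<^sup>2 + b\<^sup>2 - K) * K"
proof -
  \<comment> \<open>Multiplied by K, both sides of the tangency condition become multiples of
    K - d = |(x1, y1) - (x2, y2)|^2 / 2, which is nonzero.\<close>
  define d c where "d = x1 * x2 + y1 * y2" and "c = x1 * x2 - y1 * y2"
  have "2 * (K - d) = (x1 - x2)\<^sup>2 + (y1 - y2)\<^sup>2"
    using assms(1,2) by (simp add: d_def power2_eq_square algebra_simps)
  moreover have "0 < (x1 - x2)\<^sup>2 + (y1 - y2)\<^sup>2"
    using assms(3) by (auto simp: sum_power2_gt_zero_iff)
  ultimately have "K - d \<noteq> 0"
    by auto
  have "(x1 * y2 - y1 * x2)\<^sup>2 + d\<^sup>2 = (x1\<^sup>2 + y1\<^sup>2) * (x2\<^sup>2 + y2\<^sup>2)"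
    by (simp add: d_def power2_eq_square algebra_simps)
  also have "\<dots> = K * K"
    using assms(1,2) by simp
  finally have "(x1 * y2 - y1 * x2)\<^sup>2 = K * K - d\<^sup>2"
    by linarith
  also have "\<dots> = (K - d) * (K + d)"
    by (simp add: power2_eq_square algebra_simps)
  finally have cross: "(x1 * y2 - y1 * x2)\<^sup>2 = (K - d) * (K + d)" .
  have "(K - d) * (K - c) - K * (x2 - x1)\<^sup>2
      = (K - x1\<^sup>2 - y1\<^sup>2) * (K - x2\<^sup>2) + y1\<^sup>2 * (K - x2\<^sup>2 - y2\<^sup>2)"
    "(K - d) * (K + c) - K * (y2 - y1)\<^sup>2
      = (K - x1\<^sup>2 - y1\<^sup>2) * (K - y2\<^sup>2) + x1\<^sup>2 * (K - x2\<^sup>2 - y2\<^sup>2)"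
    by (simp_all add: d_def c_def power2_eq_square algebra_simps)
  moreover have "K - x1\<^sup>2 - y1\<^sup>2 = 0" "K - x2\<^sup>2 - y2\<^sup>2 = 0"
    using assms(1,2) by simp_all
  ultimately have dx: "K * (x2 - x1)\<^sup>2 = (K - d) * (K - c)"
    and dy: "K * (y2 - y1)\<^sup>2 = (K - d) * (K + c)"
    by simp_all
  have "(K - d) * (K * (K + d)) = K * (x1 * y2 - y1 * x2)\<^sup>2"
    unfolding cross by (simp add: algebra_simps)
  also have "\<dots> = b\<^sup>2 * (K * (x2 - x1)\<^sup>2) + a\<^sup>2 * (K * (y2 - y1)\<^sup>2)"
    unfolding assms(4) by (simp add: algebra_simps)
  also have "\<dots> = (K - d) * (b\<^sup>2 * (K - c) + a\<^sup>2 * (K + c))"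
    unfolding dx dy by (simp add: algebra_simps)
  finally have "(K - d) * (K * (K + d)) = (K - d) * (b\<^sup>2 * (K - c) + a\<^sup>2 * (K + c))" .
  then have "K * (K + d) = b\<^sup>2 * (K - c) + a\<^sup>2 * (K + c)"
    using \<open>K - d \<noteq> 0\<close> by simp
  then show ?thesis
    by (simp add: d_def c_def algebra_simps)
qed

lemma vertex_normal_identity:
  fixes x1 y1 x2 y2 x3 y3 p q g K :: real
  assumes "x2\<^sup>2 + y2\<^sup>2 = K" "x3\<^sup>2 + y3\<^sup>2 = K" "(x2, y2) \<noteq> (x3, y3)"
    and "p * x1 * x2 + q * y1 * y2 = g" "p * x1 * x3 + q * y1 * y3 = g"
  shows "(p\<^sup>2 * x1\<^sup>2 + q\<^sup>2 * y1\<^sup>2) * ((x1 + x2 + x3)\<^sup>2 + (y1 + y2 + y3)\<^sup>2)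
       = (2 * g + p * x1\<^sup>2 + q * y1\<^sup>2)\<^sup>2 + ((p - q) * x1 * y1)\<^sup>2"
proof -
  \<comment> \<open>(n1, n2) is normal to the chord between (x2, y2) and (x3, y3), and so is their sum
    (s1, s2) because both points lie on a circle centred at the origin. Hence the two are
    parallel, and Lagrange's identity for (n1, n2) and the sum of all three points gives the
    claim.\<close>
  define n1 n2 s1 s2 where "n1 = p * x1" and "n2 = q * y1" and "s1 = x2 + x3" and "s2 = y2 + y3"
  have normal_chord: "n1 * (x2 - x3) + n2 * (y2 - y3) = 0"
    using assms(4,5) by (simp add: n1_def n2_def algebra_simps)
  have sum_chord: "s1 * (x2 - x3) + s2 * (y2 - y3) = 0"
    using assms(1,2) by (simp add: s1_def s2_def power2_eq_square algebra_simps)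
  have "(n1 * s2 - n2 * s1) * (x2 - x3)
      = s2 * (n1 * (x2 - x3) + n2 * (y2 - y3)) - n2 * (s1 * (x2 - x3) + s2 * (y2 - y3))"
    "(n1 * s2 - n2 * s1) * (y2 - y3)
      = n1 * (s1 * (x2 - x3) + s2 * (y2 - y3)) - s1 * (n1 * (x2 - x3) + n2 * (y2 - y3))"
    by (simp_all add: algebra_simps)
  then have parallel: "n1 * s2 - n2 * s1 = 0"
    using normal_chord sum_chord assms(3) by auto
  have "(n1\<^sup>2 + n2\<^sup>2) * ((x1 + s1)\<^sup>2 + (y1 + s2)\<^sup>2)
      = (n1 * (x1 + s1) + n2 * (y1 + s2))\<^sup>2 + (n1 * (y1 + s2) - n2 * (x1 + s1))\<^sup>2"
    by (simp add: power2_eq_square algebra_simps)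
  moreover have "n1 * (x1 + s1) + n2 * (y1 + s2) = 2 * g + p * x1\<^sup>2 + q * y1\<^sup>2"
    using assms(4,5) by (simp add: n1_def n2_def s1_def s2_def power2_eq_square algebra_simps)
  moreover have "n1 * (y1 + s2) - n2 * (x1 + s1) = (p - q) * x1 * y1"
    using parallel by (simp add: n1_def n2_def algebra_simps)
  ultimately show ?thesis
    by (simp add: n1_def n2_def s1_def s2_def power_mult_distrib add.assoc)
qed

lemma poncelet_vertex_equation:
  fixes x1 y1 x2 y2 x3 y3 a b K :: real
  defines "P \<equiv> a\<^sup>2 + b\<^sup>2" and "M \<equiv> a\<^sup>2 - b\<^sup>2" and "h \<equiv> (x1 + x2 + x3)\<^sup>2 + (y1 + y2 + y3)\<^sup>2"
  assumes "x1\<^sup>2 + y1\<^sup>2 = K" "x2\<^sup>2 + y2\<^sup>2 = K" "x3\<^sup>2 + y3\<^sup>2 = K"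
    and "(x1, y1) \<noteq> (x2, y2)" "(x1, y1) \<noteq> (x3, y3)" "(x2, y2) \<noteq> (x3, y3)"
    and "(x1 * y2 - y1 * x2)\<^sup>2 = b\<^sup>2 * (x2 - x1)\<^sup>2 + a\<^sup>2 * (y2 - y1)\<^sup>2"
    and "(x1 * y3 - y1 * x3)\<^sup>2 = b\<^sup>2 * (x3 - x1)\<^sup>2 + a\<^sup>2 * (y3 - y1)\<^sup>2"
  shows "4 * M * K * (2 * P - K - h) * x1\<^sup>2 = K\<^sup>2 * (2 * P - K + M)\<^sup>2 - (K + M)\<^sup>2 * K * h"
proof -
  have "(K - M) * x1 * x2 + (K + M) * y1 * y2 = (P - K) * K"
    "(K - M) * x1 * x3 + (K + M) * y1 * y3 = (P - K) * K"
    using chord_tangency_bilinear assms(4-11) unfolding P_def M_def by blast+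
  from vertex_normal_identity[OF assms(5,6,9) this]
  have "((K - M)\<^sup>2 * x1\<^sup>2 + (K + M)\<^sup>2 * y1\<^sup>2) * h
      = (2 * ((P - K) * K) + (K - M) * x1\<^sup>2 + (K + M) * y1\<^sup>2)\<^sup>2 + (K - M - (K + M))\<^sup>2 * x1\<^sup>2 * y1\<^sup>2"
    unfolding h_def by (simp only: power_mult_distrib)
  moreover have "y1\<^sup>2 = K - x1\<^sup>2"
    using assms(4) by simp
  ultimately have vertex: "((K - M)\<^sup>2 * x1\<^sup>2 + (K + M)\<^sup>2 * (K - x1\<^sup>2)) * h
      = (2 * ((P - K) * K) + (K - M) * x1\<^sup>2 + (K + M) * (K - x1\<^sup>2))\<^sup>2
        + (K - M - (K + M))\<^sup>2 * x1\<^sup>2 * (K - x1\<^sup>2)"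
    by simp
  have "4 * M * K * (2 * P - K - h) * x1\<^sup>2 - (K\<^sup>2 * (2 * P - K + M)\<^sup>2 - (K + M)\<^sup>2 * K * h)
      = ((K - M)\<^sup>2 * x1\<^sup>2 + (K + M)\<^sup>2 * (K - x1\<^sup>2)) * h
        - ((2 * ((P - K) * K) + (K - M) * x1\<^sup>2 + (K + M) * (K - x1\<^sup>2))\<^sup>2
           + (K - M - (K + M))\<^sup>2 * x1\<^sup>2 * (K - x1\<^sup>2))"
    by (simp add: power2_eq_square algebra_simps)
  with vertex show ?thesis
    by simp
qed

lemma norm_sum_rectangle_corners:
  fixes x1 y1 x2 y2 x3 y3 :: real
  assumes "x2\<^sup>2 = x1\<^sup>2" "x3\<^sup>2 = x1\<^sup>2" "y2\<^sup>2 = y1\<^sup>2" "y3\<^sup>2 = y1\<^sup>2"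
    and "(x1, y1) \<noteq> (x2, y2)" "(x1, y1) \<noteq> (x3, y3)" "(x2, y2) \<noteq> (x3, y3)"
  shows "(x1 + x2 + x3)\<^sup>2 + (y1 + y2 + y3)\<^sup>2 = x1\<^sup>2 + y1\<^sup>2"
proof -
  have "x2 = x1 \<or> x2 = - x1" "x3 = x1 \<or> x3 = - x1" "y2 = y1 \<or> y2 = - y1" "y3 = y1 \<or> y3 = - y1"
    using assms(1-4) by (simp_all add: power2_eq_iff)
  then show ?thesis
    using assms(5-7) by (auto simp: power2_eq_square algebra_simps)
qed

lemma concentric_poncelet_coords:
  fixes x1 y1 x2 y2 x3 y3 a b K :: real
  defines "h \<equiv> (x1 + x2 + x3)\<^sup>2 + (y1 + y2 + y3)\<^sup>2"
  assumes circle: "x1\<^sup>2 + y1\<^sup>2 = K" "x2\<^sup>2 + y2\<^sup>2 = K" "x3\<^sup>2 + y3\<^sup>2 = K"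
    and distinct: "(x1, y1) \<noteq> (x2, y2)" "(x2, y2) \<noteq> (x3, y3)" "(x3, y3) \<noteq> (x1, y1)"
    and tangent: "(x1 * y2 - y1 * x2)\<^sup>2 = b\<^sup>2 * (x2 - x1)\<^sup>2 + a\<^sup>2 * (y2 - y1)\<^sup>2"
      "(x2 * y3 - y2 * x3)\<^sup>2 = b\<^sup>2 * (x3 - x2)\<^sup>2 + a\<^sup>2 * (y3 - y2)\<^sup>2"
      "(x3 * y1 - y3 * x1)\<^sup>2 = b\<^sup>2 * (x1 - x3)\<^sup>2 + a\<^sup>2 * (y1 - y3)\<^sup>2"
    and "0 < a" "0 < b" "a \<noteq> b" "h < K"
  shows "K = (a + b)\<^sup>2 \<and> h = (a - b)\<^sup>2"
proof -
  define P M where "P = a\<^sup>2 + b\<^sup>2" and "M = a\<^sup>2 - b\<^sup>2"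
  define e f where "e = 4 * M * K * (2 * P - K - h)"
    and "f = K\<^sup>2 * (2 * P - K + M)\<^sup>2 - (K + M)\<^sup>2 * K * h"
  have swap: "(u * v' - v * u')\<^sup>2 = b\<^sup>2 * (u' - u)\<^sup>2 + a\<^sup>2 * (v' - v)\<^sup>2"
    if "(u' * v - v' * u)\<^sup>2 = b\<^sup>2 * (u - u')\<^sup>2 + a\<^sup>2 * (v - v')\<^sup>2" for u v u' v' :: real
    using that by (simp add: power2_eq_square algebra_simps)
  note vertex = poncelet_vertex_equation[where a = a and b = b]
  have "e * x1\<^sup>2 = f" "e * x2\<^sup>2 = f" "e * x3\<^sup>2 = f"
    using vertex[OF circle(1,2,3) distinct(1) distinct(3)[symmetric] distinct(2)
        tangent(1) swap[OF tangent(3)]]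
      vertex[OF circle(2,3,1) distinct(2) distinct(1)[symmetric] distinct(3)
        tangent(2) swap[OF tangent(1)]]
      vertex[OF circle(3,1,2) distinct(3) distinct(2)[symmetric] distinct(1)
        tangent(3) swap[OF tangent(2)]]
    by (simp_all add: e_def f_def P_def M_def h_def add_ac)
  have "e = 0"
  proof (rule ccontr)
    \<comment> \<open>Otherwise the vertices are three corners of a rectangle centred at the origin, and their
      sum is the negative of the fourth corner, which lies on the circle.\<close>
    assume "e \<noteq> 0"
    then have x: "x2\<^sup>2 = x1\<^sup>2" "x3\<^sup>2 = x1\<^sup>2"
      using \<open>e * x1\<^sup>2 = f\<close> \<open>e * x2\<^sup>2 = f\<close> \<open>e * x3\<^sup>2 = f\<close>
      by (metis mult_left_cancel)+
    then have y: "y2\<^sup>2 = y1\<^sup>2" "y3\<^sup>2 = y1\<^sup>2"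
      using circle by linarith+
    have "h = K"
      using norm_sum_rectangle_corners[OF x y distinct(1) distinct(3)[symmetric] distinct(2)]
        circle(1)
      by (simp add: h_def)
    with \<open>h < K\<close> show False
      by simp
  qed
  then have "f = 0"
    using \<open>e * x1\<^sup>2 = f\<close> by simp
  have K: "0 < K"
    using \<open>h < K\<close> by (simp add: h_def add_nonneg_nonneg order.strict_trans1[rotated])
  have "M \<noteq> 0"
    using \<open>0 < a\<close> \<open>0 < b\<close> \<open>a \<noteq> b\<close> by (simp add: M_def power2_eq_iff_nonneg)
  then have h: "h = 2 * P - K"
    using \<open>e = 0\<close> K by (simp add: e_def)
  then have "P < K"
    using \<open>h < K\<close> by simp
  have "f = 2 * K * (K - P) * ((K - (a + b)\<^sup>2) * (K - (a - b)\<^sup>2))"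
    by (simp add: f_def h P_def M_def power2_eq_square algebra_simps)
  then have "(K - (a + b)\<^sup>2) * (K - (a - b)\<^sup>2) = 0"
    using \<open>f = 0\<close> \<open>P < K\<close> K by simp
  moreover have "(a - b)\<^sup>2 < K"
  proof -
    have "(a - b)\<^sup>2 = P - 2 * (a * b)"
      by (simp add: P_def power2_eq_square algebra_simps)
    moreover have "0 < a * b"
      using \<open>0 < a\<close> \<open>0 < b\<close> by simp
    ultimately show ?thesis
      using \<open>P < K\<close> by linarith
  qed
  ultimately have "K = (a + b)\<^sup>2"
    by simp
  then show ?thesis
    using h by (simp add: P_def power2_eq_square algebra_simps)
qed

lemma concentric_poncelet:
  fixes A B C Z :: point
  defines "H \<equiv> (A - Z) + (B - Z) + (C - Z)"
  assumes "(A - Z) \<bullet> (A - Z) = K" "(B - Z) \<bullet> (B - Z) = K" "(C - Z) \<bullet> (C - Z) = K"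
    and "A \<noteq> B" "B \<noteq> C" "C \<noteq> A"
    and "circumscribed_about A B C (ellipse Z a b th)"
    and "0 < a" "0 < b" "a \<noteq> b" "H \<bullet> H < K"
  shows "K = (a + b)\<^sup>2 \<and> H \<bullet> H = (a - b)\<^sup>2"
proof -
  define x y where "x X = major_coord th (X - Z)" and "y X = minor_coord th (X - Z)" for X
  have sq_dist: "(x X - x Y)\<^sup>2 + (y X - y Y)\<^sup>2 = (X - Y) \<bullet> (X - Y)" for X Y
    using major_minor_coord_inner[of th "X - Y" "X - Y"]
    by (simp add: x_def y_def major_coord_def minor_coord_def inner_diff_left power2_eq_square)
  have distinct: "(x X, y X) \<noteq> (x Y, y Y)" if "X \<noteq> Y" for X Y
    using sq_dist[of X Y] that by auto
  have "(x X)\<^sup>2 + (y X)\<^sup>2 = (X - Z) \<bullet> (X - Z)" for X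
    using major_minor_coord_inner[of th "X - Z" "X - Z"] by (simp add: x_def y_def power2_eq_square)
  then have circle: "(x A)\<^sup>2 + (y A)\<^sup>2 = K" "(x B)\<^sup>2 + (y B)\<^sup>2 = K" "(x C)\<^sup>2 + (y C)\<^sup>2 = K"
    using assms(2-4) by simp_all
  have "x A + x B + x C = major_coord th H" "y A + y B + y C = minor_coord th H"
    by (simp_all only: x_def y_def H_def major_coord_def minor_coord_def inner_add_left)
  then have H: "(x A + x B + x C)\<^sup>2 + (y A + y B + y C)\<^sup>2 = H \<bullet> H"
    using major_minor_coord_inner[of th H H] by (simp add: power2_eq_square)
  have "(x A * y B - y A * x B)\<^sup>2 = b\<^sup>2 * (x B - x A)\<^sup>2 + a\<^sup>2 * (y B - y A)\<^sup>2"
    "(x B * y C - y B * x C)\<^sup>2 = b\<^sup>2 * (x C - x B)\<^sup>2 + a\<^sup>2 * (y C - y B)\<^sup>2"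
    "(x C * y A - y C * x A)\<^sup>2 = b\<^sup>2 * (x A - x C)\<^sup>2 + a\<^sup>2 * (y A - y C)\<^sup>2"
    using assms(8) tangent_sideline_ellipse[OF assms(5) assms(9,10)]
      tangent_sideline_ellipse[OF assms(6) assms(9,10)]
      tangent_sideline_ellipse[OF assms(7) assms(9,10)]
    unfolding circumscribed_about_def by (simp_all only: x_def y_def)
  from concentric_poncelet_coords[OF circle distinct[OF assms(5)] distinct[OF assms(6)]
      distinct[OF assms(7)] this assms(9-11)]
  show ?thesis
    using assms(12) unfolding H by blast
qed

theorem corollary5p9:
  fixes A B C Z :: point and a b th :: real
  assumes "acute_triangle A B C"
    and "a > b" and "b > 0"
    and "is_circumcenter Z A B C"
    and "circumscribed_about A B C (ellipse Z a b th)"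
  shows "inradius (foot A B C) (foot B C A) (foot C A B) = a * b / (a + b)"
proof -
  define K H where "K = (A - Z) \<bullet> (A - Z)" and "H = (A - Z) + (B - Z) + (C - Z)"
  have circle: "(A - Z) \<bullet> (A - Z) = K" "(B - Z) \<bullet> (B - Z) = K" "(C - Z) \<bullet> (C - Z) = K"
    using is_circumcenter_inner_eq[OF assms(4)] by (simp_all add: K_def)
  note acute = acute_triangle_inner_pos[OF assms(1)]
  then have distinct: "A \<noteq> B" "B \<noteq> C" "C \<noteq> A"
    by auto
  have "H \<bullet> H < K"
    using orthocenter_inside_circumcircle[where A = "A - Z" and B = "B - Z" and C = "C - Z"]
      circle acute
    by (simp add: H_def)
  then have K: "K = (a + b)\<^sup>2" and HH: "H \<bullet> H = (a - b)\<^sup>2"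
    using concentric_poncelet[OF circle distinct assms(5)] assms(2,3) unfolding H_def by simp_all
  have "inradius (foot A B C) (foot B C A) (foot C A B) = (K - H \<bullet> H) / (4 * sqrt K)"
    unfolding H_def by (rule inradius_orthic_triangle[OF circle acute])
  also have "K - H \<bullet> H = 4 * (a * b)"
    unfolding K HH by (simp add: power2_eq_square algebra_simps)
  also have "sqrt K = a + b"
    using assms(2,3) unfolding K by simp
  also have "4 * (a * b) / (4 * (a + b)) = a * b / (a + b)"
    by (rule mult_divide_mult_cancel_left) simp
  finally show ?thesis .
qed

end
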